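(* Let $(c_k)_{k\ge0}$ be a real sequence with $c_0=1$ and $A:=\sum_{k=0}^\infty|c_k|<\infty$, such that $\sum_{k=q}^\infty|c_k|\le Ce^{-\lambda q}$ for every $q\ge1$, where $C,\lambda>0$ are constants. Let $(Y_n)_{n\ge1}$ be i.i.d. with $\mathbb{E}[Y_1^2]<\infty$, and assume there is $\delta>0$ with $\mathbb{P}(Y_1<-\delta)>0$ and $\mathbb{P}(Y_1>\delta)>0$. Let $X_n:=\sum_{k=1}^n c_{n-k}Y_k$ and $p_N(x):=\mathbb{P}(\sup_{n=1,\dots,N}X_n\le x)$. Then for every $x\in[0,\delta A)$ there is $c(x)>0$ such that $p_N(x)\precsim\exp(-c(x)\sqrt N)$ as $N\to\infty$. If moreover $\mathbb{E}[\exp(|Y_1|^\alpha)]<\infty$ for some $\alpha>0$, then for every $x\in[0,\delta A)$ there is $c(x)>0$ such that $p_N(x)\precsim\exp(-c(x)N/\log N)$ as $N\to\infty$.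
   Context: $f\precsim g$ means $\limsup_{N\to\infty} f(N)/g(N)<\infty$. *)

theory Defs
  imports "HOL-Probability.Probability" "HOL-Library.Landau_Symbols"
begin

definition ma_proc :: "(nat \<Rightarrow> real) \<Rightarrow> (nat \<Rightarrow> 'a \<Rightarrow> real) \<Rightarrow> nat \<Rightarrow> 'a \<Rightarrow> real" where
  "ma_proc c Y n \<omega> = (\<Sum>k=1..n. c (n - k) * Y k \<omega>)"

definition persist_prob :: "'a measure \<Rightarrow> (nat \<Rightarrow> 'a \<Rightarrow> real) \<Rightarrow> nat \<Rightarrow> real \<Rightarrow> real" where
  "persist_prob M X N x = measure M {\<omega> \<in> space M. \<forall>n\<in>{1..N}. X n \<omega> \<le> x}"

end

theory Submission
  imports Defs
begin

(*
  We prove the stronger statement that p_N(x) decays exponentially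
  in N; both bounds of the theorem follow since sqrt N <= N and N / ln N <= N.

  Split {1..N} into B = N div m blocks W_i = {(i-1)m+1 .. im}.  Write
  X_{im} = R_i + S_i, with R_i the contribution of the earlier blocks and S_i that of W_i.
  Block i is "good" if every Y_k in W_i has the sign of c_{im-k} and modulus > delta (then
  S_i >= delta * sum_{j<m} |c_j|, probability >= p^m), and "calm" if R_i > -eps.  On the
  event of survival, no calm block is good.  The weight F_B = prod_i (1 - [good and calm])
  * (w if calm else 1), with w = 1/(1 - p^m), has expectation <= 1 (independence of
  the blocks), and on survival F_B = w^(number of calm blocks).  Hence either half of the
  blocks are calm (Markov inequality on F_B) or half are not calm; a non-calm block forces
  some earlier |Y_k| to be exponentially large in the distance (the coefficients decay
  exponentially), which is controlled by an exponential Chebyshev bound with the product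
  prod_k (1 + a Y_k^2).  Choosing m large makes both terms exponentially small.
*)

text \<open>Coordinate projections are measurable on every product space, also for coordinates outside
  the index set (where they are the constant undefined).\<close>
lemma measurable_component_any[measurable]:
  "(\<lambda>v. v k) \<in> borel_measurable (PiM J (\<lambda>_. borel :: real measure))"
proof (cases "k \<in> J")
  case False
  have "(\<lambda>v. undefined) \<in> borel_measurable (PiM J (\<lambda>_. borel :: real measure))" by simp
  then show ?thesis
    by (rule measurable_cong[THEN iffD1, rotated])
       (use False in \<open>auto simp: space_PiM PiE_def extensional_def\<close>)
qed measurable

text \<open>Block bookkeeping on a fixed sample path y: block length m, threshold \<delta> for the
  innovations, calmness margin \<epsilon> and reward w for a calm block.\<close>
locale block_scheme = fixes c :: "nat \<Rightarrow> real" and m :: nat and \<delta> \<epsilon> w :: real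
begin

definition good_set :: "nat \<Rightarrow> real set" where
  "good_set d = (if c d > 0 then {\<delta><..} else if c d < 0 then {..< -\<delta>} else UNIV)"

definition past_sum :: "nat \<Rightarrow> (nat \<Rightarrow> real) \<Rightarrow> real" where
  "past_sum i y = (\<Sum>k\<in>{1..(i-1)*m}. c (i*m - k) * y k)"

definition good_window :: "nat \<Rightarrow> (nat \<Rightarrow> real) \<Rightarrow> real" where
  "good_window i y = (\<Prod>k\<in>{(i-1)*m+1..i*m}. indicator (good_set (i*m-k)) (y k))"

definition calm :: "nat \<Rightarrow> (nat \<Rightarrow> real) \<Rightarrow> bool" where
  "calm i y \<longleftrightarrow> past_sum i y > -\<epsilon>"

definition factor :: "nat \<Rightarrow> (nat \<Rightarrow> real) \<Rightarrow> real" where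
  "factor i y = (1 - good_window i y * (if calm i y then 1 else 0)) * (if calm i y then w else 1)"

definition weight :: "nat \<Rightarrow> (nat \<Rightarrow> real) \<Rightarrow> real" where
  "weight j y = (\<Prod>i\<in>{1..j}. factor i y)"

definition ma_path :: "nat \<Rightarrow> (nat \<Rightarrow> real) \<Rightarrow> real" where
  "ma_path n y = (\<Sum>k\<in>{1..n}. c (n - k) * y k)"

lemma good_window_cases:
  "good_window i y = (if \<forall>k\<in>{(i-1)*m+1..i*m}. y k \<in> good_set (i*m-k) then 1 else 0)"
  unfolding good_window_def by (auto simp: indicator_def)

lemma good_window_01: "good_window i y = 0 \<or> good_window i y = 1"
  by (simp add: good_window_cases)

lemma ma_path_split:
  assumes "i \<ge> 1"
  shows "ma_path (i*m) y = past_sum i y + (\<Sum>k\<in>{(i-1)*m+1..i*m}. c (i*m - k) * y k)"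
proof -
  have "{1..i*m} = {1..(i-1)*m} \<union> {(i-1)*m+1..i*m}"
    using assms by (auto simp: algebra_simps)
  then show ?thesis unfolding ma_path_def past_sum_def
    by (simp add: sum.union_disjoint)
qed

lemma window_reindex:
  fixes f :: "nat \<Rightarrow> real"
  assumes "i \<ge> 1"
  shows "(\<Sum>k\<in>{(i-1)*m+1..i*m}. f (i*m - k)) = (\<Sum>j<m. f j)"
proof (rule sum.reindex_bij_witness[where i="\<lambda>j. i*m - j" and j="\<lambda>k. i*m - k"])
  fix a assume "a \<in> {(i-1)*m+1..i*m}" then show "i*m - a \<in> {..<m}"
    using assms by (cases i) (auto simp: algebra_simps)
next
  fix b assume "b \<in> {..<m}" then show "i*m - b \<in> {(i-1)*m+1..i*m}" "i*m - (i*m - b) = b"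
    using assms by (cases i; auto)+
qed auto

lemma window_sum_large:
  assumes "i \<ge> 1" "good_window i y \<noteq> 0"
  shows "(\<Sum>k\<in>{(i-1)*m+1..i*m}. c (i*m - k) * y k) \<ge> \<delta> * (\<Sum>j<m. \<bar>c j\<bar>)"
proof -
  have term_large: "\<delta> * \<bar>c d\<bar> \<le> c d * t" if "t \<in> good_set d" for d t
  proof -
    consider "c d > 0" | "c d < 0" | "c d = 0" by linarith
    then show ?thesis
    proof cases
      case 1 then show ?thesis using that by (simp add: good_set_def mult_left_mono)
    next
      case 2 then show ?thesis using that mult_left_mono_neg[of t "-\<delta>" "c d"]
        by (simp add: good_set_def mult.commute)
    qed simp
  qed
  have "\<forall>k\<in>{(i-1)*m+1..i*m}. y k \<in> good_set (i*m-k)"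
    using assms(2) good_window_cases by (auto split: if_splits)
  then have "(\<Sum>k\<in>{(i-1)*m+1..i*m}. \<delta> * \<bar>c (i*m - k)\<bar>) \<le> (\<Sum>k\<in>{(i-1)*m+1..i*m}. c (i*m - k) * y k)"
    by (intro sum_mono term_large) auto
  also have "(\<Sum>k\<in>{(i-1)*m+1..i*m}. \<delta> * \<bar>c (i*m - k)\<bar>) = \<delta> * (\<Sum>j<m. \<bar>c j\<bar>)"
    using window_reindex[OF assms(1), of "\<lambda>j. \<delta> * \<bar>c j\<bar>"] by (simp add: sum_distrib_left)
  finally show ?thesis .
qed

lemma weight_Suc: "weight (Suc j) y = weight j y * factor (Suc j) y"
  unfolding weight_def by (simp add: atLeastAtMostSuc_conv mult.commute)

lemma factor_bounds: "w \<ge> 1 \<Longrightarrow> 0 \<le> factor i y \<and> factor i y \<le> w"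
  using good_window_01[of i y] by (auto simp: factor_def)

lemma weight_nonneg: "w \<ge> 1 \<Longrightarrow> weight j y \<ge> 0"
  unfolding weight_def using factor_bounds by (simp add: prod_nonneg)

lemma weight_le_power: "w \<ge> 1 \<Longrightarrow> weight j y \<le> w ^ j"
proof (induction j)
  case (Suc j)
  then show ?case
    using factor_bounds[OF Suc.prems, of "Suc j" y] weight_nonneg[OF Suc.prems, of j y]
    by (simp add: weight_Suc mult.commute[of w] mult_mono)
qed (simp add: weight_def)

lemma past_sum_local:
  "(\<And>k. k \<in> {1..(i-1)*m} \<Longrightarrow> y k = z k) \<Longrightarrow> past_sum i y = past_sum i z"
  unfolding past_sum_def by (intro sum.cong) auto

lemma good_window_local:
  "(\<And>k. k \<in> {(i-1)*m+1..i*m} \<Longrightarrow> y k = z k) \<Longrightarrow> good_window i y = good_window i z"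
  unfolding good_window_def by (intro prod.cong) auto

lemma weight_local:
  assumes "\<And>k. k \<in> {1..j*m} \<Longrightarrow> y k = z k"
  shows "weight j y = weight j z"
  unfolding weight_def
proof (intro prod.cong refl)
  fix i assume i: "i \<in> {1..j}"
  then have le: "(i-1)*m \<le> j*m" "i*m \<le> j*m" by (auto intro: le_trans[OF diff_le_self])
  have "past_sum i y = past_sum i z"
  proof (rule past_sum_local)
    fix k assume k: "k \<in> {1..(i-1)*m}"
    then have "k \<le> j*m" using le(1) by (meson atLeastAtMost_iff order_trans)
    then show "y k = z k" using k by (intro assms) auto
  qed
  moreover have "good_window i y = good_window i z"
  proof (rule good_window_local)
    fix k assume k: "k \<in> {(i-1)*m+1..i*m}"
    then have "k \<le> j*m" using le(2) by (meson atLeastAtMost_iff order_trans)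
    then show "y k = z k" using k by (intro assms) auto
  qed
  ultimately show "factor i y = factor i z" by (simp add: factor_def calm_def)
qed

lemma good_set_borel[measurable]: "good_set d \<in> sets borel"
  by (simp add: good_set_def)

lemma past_sum_meas[measurable]: "past_sum i \<in> borel_measurable (PiM J (\<lambda>_. borel))"
  unfolding past_sum_def by measurable

lemma good_window_meas[measurable]: "good_window i \<in> borel_measurable (PiM J (\<lambda>_. borel))"
  unfolding good_window_def by measurable

lemma calm_meas[measurable]: "Measurable.pred (PiM J (\<lambda>_. borel)) (calm i)"
  unfolding calm_def by measurable

lemma weight_meas[measurable]: "weight i \<in> borel_measurable (PiM J (\<lambda>_. borel))"
  unfolding weight_def factor_def by measurable

lemma ma_path_meas[measurable]: "ma_path i \<in> borel_measurable (PiM J (\<lambda>_. borel))"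
  unfolding ma_path_def by measurable

text \<open>On a surviving path a calm block cannot be good, so its factor is exactly w.\<close>
lemma factor_on_survival:
  assumes "i \<ge> 1" and margin: "\<delta> * (\<Sum>j<m. \<bar>c j\<bar>) \<ge> x + \<epsilon>"
    and "ma_path (i*m) y \<le> x"
  shows "factor i y = (if calm i y then w else 1)"
proof (cases "calm i y \<and> good_window i y \<noteq> 0")
  case True
  then have "ma_path (i*m) y > x"
    using ma_path_split[OF assms(1)] window_sum_large[OF assms(1), of y] margin
    by (simp add: calm_def)
  then show ?thesis using assms(3) by simp
qed (use good_window_01[of i y] in \<open>auto simp: factor_def\<close>)

lemma weight_on_survival:
  assumes "m \<ge> 1" "B * m \<le> N"
    and margin: "\<delta> * (\<Sum>j<m. \<bar>c j\<bar>) \<ge> x + \<epsilon>"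
    and survival: "\<forall>n\<in>{1..N}. ma_path n y \<le> x"
  shows "weight B y = w ^ card {i\<in>{1..B}. calm i y}"
proof -
  have "factor i y = (if calm i y then w else 1)" if "i \<in> {1..B}" for i
  proof (rule factor_on_survival[OF _ margin])
    have "i * m \<le> N" using that assms(2) by (meson atLeastAtMost_iff le_trans mult_le_mono1)
    moreover have "i * m \<ge> 1" using that assms(1) by simp
    ultimately show "ma_path (i*m) y \<le> x" using survival by simp
  qed (use that in simp)
  then have "weight B y = (\<Prod>i\<in>{1..B}. (if calm i y then w else 1))"
    unfolding weight_def by (intro prod.cong) auto
  also have "\<dots> = (\<Prod>i\<in>{i\<in>{1..B}. calm i y}. w)"
    by (subst prod.inter_filter[symmetric]) auto
  finally show ?thesis by simp
qed

end

text \<open>Number of levels d at which t exceeds the geometric scale K e^{\<lambda> d / 2}; its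
  exponential is dominated by 1 + const * t^2, which makes it amenable to second moments.\<close>
definition level_count :: "real \<Rightarrow> real \<Rightarrow> real \<Rightarrow> nat" where
  "level_count K lam t = card {d::nat. K * exp (lam * real d / 2) \<le> \<bar>t\<bar>}"

lemma level_set_finite:
  assumes "K > 0" "lam > 0"
  shows "finite {d::nat. K * exp (lam * real d / 2) \<le> \<bar>t\<bar>}"
proof -
  have "d \<le> nat \<lceil>2 * \<bar>t\<bar> / (K * lam)\<rceil>" if "K * exp (lam * real d / 2) \<le> \<bar>t\<bar>" for d
  proof -
    have "K * (1 + lam * real d / 2) \<le> K * exp (lam * real d / 2)"
      using assms exp_ge_add_one_self[of "lam * real d / 2"] by (intro mult_left_mono) auto
    then have "K * lam * real d / 2 \<le> \<bar>t\<bar>" using that assms by (simp add: algebra_simps)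
    then have "real d \<le> 2 * \<bar>t\<bar> / (K * lam)" using assms by (simp add: field_simps)
    then show ?thesis by linarith
  qed
  then have "{d::nat. K * exp (lam * real d / 2) \<le> \<bar>t\<bar>} \<subseteq> {..nat \<lceil>2 * \<bar>t\<bar> / (K * lam)\<rceil>}"
    by auto
  then show ?thesis using finite_subset by blast
qed

lemma exp_level_count_le:
  assumes K: "K > 0" and l: "lam > 0"
  shows "exp (lam / 2 * real (level_count K lam t)) \<le> 1 + exp (lam/2) * t\<^sup>2 / K\<^sup>2"
proof (cases "{d::nat. K * exp (lam * real d / 2) \<le> \<bar>t\<bar>} = {}")
  case True
  then show ?thesis by (simp add: level_count_def)
next
  case False
  define S where "S = {d::nat. K * exp (lam * real d / 2) \<le> \<bar>t\<bar>}"
  have fS: "finite S" using level_set_finite[OF K l] by (simp add: S_def)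
  define D where "D = Max S"
  have DS: "D \<in> S" unfolding D_def using False fS by (intro Max_in) (auto simp: S_def)
  have "card S \<le> card {..D}" using fS by (intro card_mono) (auto simp: D_def)
  then have card_S: "card S \<le> D + 1" by simp
  have hD: "K * exp (lam * real D / 2) \<le> \<bar>t\<bar>" using DS by (simp add: S_def)
  have "K \<le> K * exp (lam * real D / 2)" using K l by simp
  then have "K \<le> \<bar>t\<bar>" using hD by linarith
  then have "1 \<le> \<bar>t\<bar> / K" using K by simp
  then have "\<bar>t\<bar> / K * 1 \<le> \<bar>t\<bar> / K * (\<bar>t\<bar> / K)" by (intro mult_left_mono) auto
  then have t_K: "\<bar>t\<bar> / K \<le> t\<^sup>2 / K\<^sup>2" by (simp add: power2_eq_square)
  have "exp (lam / 2 * real (level_count K lam t)) \<le> exp (lam / 2 * real (D + 1))"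
    using card_S l by (simp add: level_count_def S_def[symmetric])
  also have "\<dots> = exp (lam/2) * exp (lam * real D / 2)"
    by (simp add: exp_add[symmetric] algebra_simps)
  also have "\<dots> \<le> exp (lam/2) * (\<bar>t\<bar> / K)"
    using hD K by (simp add: field_simps)
  also have "\<dots> \<le> exp (lam/2) * (t\<^sup>2 / K\<^sup>2)" by (rule mult_left_mono[OF t_K]) simp
  finally show ?thesis by simp
qed

locale block_scheme_decay = block_scheme c m \<delta> \<epsilon> w
  for c m \<delta> \<epsilon> w +
  fixes C lam :: real
  assumes m_pos: "m \<ge> 1" and eps_pos: "\<epsilon> > 0" and C_pos: "C > 0" and lam_pos: "lam > 0"
    and coeff_decay: "\<And>d. d \<ge> 1 \<Longrightarrow> \<bar>c d\<bar> \<le> C * exp (- lam * real d)"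
begin

text \<open>Scale K: an innovation at distance d before the end of a block must exceed
  K e^{\<lambda> d / 2} to make the block non-calm.\<close>
definition threshold :: real where
  "threshold = \<epsilon> * (1 - exp (- lam/2)) / C * exp (lam * real m / 2)"

lemma threshold_pos: "threshold > 0"
  using eps_pos C_pos lam_pos by (simp add: threshold_def)

text \<open>If the past pulls X_{im} below -\<epsilon>, some earlier innovation is large: otherwise the past
  sum is dominated by the geometric series \<epsilon>(1-\<rho>) sum \<rho>^t <= \<epsilon>, \<rho> = e^{-\<lambda>/2}.\<close>
lemma uncalm_witness:
  assumes "i \<ge> 1" and "\<not> calm i y"
  shows "\<exists>k\<in>{1..(i-1)*m}. threshold * exp (lam * real (i*m - k) / 2) \<le> \<bar>y k\<bar>"
proof (rule ccontr)
  define \<rho> where "\<rho> = exp (- lam/2)"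
  define L where "L = (i-1)*m"
  have \<rho>: "\<rho> < 1" "\<rho> > 0" using lam_pos by (auto simp: \<rho>_def)
  assume "\<not> ?thesis"
  then have small: "\<bar>y k\<bar> < threshold * exp (lam * real (i*m - k) / 2)" if "k \<in> {1..L}" for k
    using that by (auto simp: L_def not_le)
  have past: "past_sum i y \<le> - \<epsilon>" using assms(2) by (simp add: calm_def)
  have term_small: "\<bar>c (i*m - k) * y k\<bar> < \<epsilon> * (1 - \<rho>) * \<rho> ^ (L - k)" if k: "k \<in> {1..L}" for k
  proof -
    define d where "d = i*m - k"
    have dm: "d \<ge> m" "L - k = d - m" using k assms(1) by (auto simp: d_def L_def algebra_simps)
    have "\<bar>c d * y k\<bar> \<le> C * exp (- lam * real d) * \<bar>y k\<bar>"
      using coeff_decay[of d] dm m_pos by (simp add: abs_mult mult_right_mono)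
    also have "\<dots> < C * exp (- lam * real d) * (threshold * exp (lam * real d / 2))"
      using small[OF k] C_pos unfolding d_def by (intro mult_strict_left_mono) auto
    also have "\<dots> = \<epsilon> * (1 - \<rho>) * exp (- lam / 2 * real (d - m))"
      using C_pos dm by (simp add: threshold_def \<rho>_def exp_add[symmetric] of_nat_diff field_simps)
    also have "\<dots> = \<epsilon> * (1 - \<rho>) * \<rho> ^ (L - k)"
      unfolding \<rho>_def dm(2) exp_of_nat2_mult[symmetric] by simp
    finally show ?thesis by (simp add: d_def)
  qed
  have nonempty: "{1..L} \<noteq> {}"
  proof
    assume "{1..L} = {}"
    then have "past_sum i y = 0" by (simp add: past_sum_def L_def)
    then show False using past eps_pos by simp
  qed
  have "\<bar>past_sum i y\<bar> \<le> (\<Sum>k\<in>{1..L}. \<bar>c (i*m - k) * y k\<bar>)"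
    unfolding past_sum_def L_def by (rule sum_abs)
  also have "\<dots> < (\<Sum>k\<in>{1..L}. \<epsilon> * (1 - \<rho>) * \<rho> ^ (L - k))"
    by (rule sum_strict_mono[OF _ nonempty term_small]) simp
  also have "\<dots> = \<epsilon> * ((1 - \<rho>) * (\<Sum>t<L. \<rho> ^ t))"
  proof -
    have "(\<Sum>k\<in>{1..L}. \<rho> ^ (L - k)) = (\<Sum>t<L. \<rho> ^ t)"
      by (rule sum.reindex_bij_witness[where i="\<lambda>t. L - t" and j="\<lambda>k. L - k"]) auto
    then show ?thesis by (simp add: sum_distrib_left[symmetric] mult.assoc)
  qed
  also have "\<dots> = \<epsilon> * (1 - \<rho> ^ L)" by (simp add: one_diff_power_eq)
  also have "\<dots> \<le> \<epsilon>" using \<rho> eps_pos by simp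
  finally show False using past by linarith
qed

text \<open>Charging every non-calm block i to its witness k (injectively, via the distance im - k),
  the number of non-calm blocks is at most the total level count of the innovations.\<close>
lemma uncalm_count_le:
  assumes "B * m \<le> N"
  shows "card {i\<in>{1..B}. \<not> calm i y} \<le> (\<Sum>k\<in>{1..N}. level_count threshold lam (y k))"
proof -
  define A where
    "A k = {i\<in>{1..B}. k < i*m \<and> threshold * exp (lam * real (i*m - k) / 2) \<le> \<bar>y k\<bar>}" for k
  have "{i\<in>{1..B}. \<not> calm i y} \<subseteq> (\<Union>k\<in>{1..N}. A k)"
  proof
    fix i assume i: "i \<in> {i\<in>{1..B}. \<not> calm i y}"
    then obtain k where k: "k \<in> {1..(i-1)*m}"
      and large: "threshold * exp (lam * real (i*m - k) / 2) \<le> \<bar>y k\<bar>"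
      using uncalm_witness[of i y] by auto
    have "i * m \<le> B * m" using i by simp
    then have "i * m \<le> N" using assms by linarith
    moreover have "(i-1)*m < i*m" using i m_pos by (simp add: diff_mult_distrib)
    moreover have "1 \<le> k" "k \<le> (i-1)*m" using k by auto
    ultimately have "1 \<le> k \<and> k \<le> N" "k < i*m" by linarith+
    then show "i \<in> (\<Union>k\<in>{1..N}. A k)"
      using large i by (auto simp: A_def)
  qed
  then have "card {i\<in>{1..B}. \<not> calm i y} \<le> card (\<Union>k\<in>{1..N}. A k)"
    by (intro card_mono) (simp_all add: A_def)
  also have "\<dots> \<le> (\<Sum>k\<in>{1..N}. card (A k))" by (rule card_UN_le) simp
  also have "\<dots> \<le> (\<Sum>k\<in>{1..N}. level_count threshold lam (y k))"
  proof (intro sum_mono)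
    fix k
    have "inj_on (\<lambda>i. i * m - k) (A k)"
    proof (rule inj_onI)
      fix a b assume "a \<in> A k" "b \<in> A k" "a * m - k = b * m - k"
      moreover have "k < a * m" "k < b * m" using calculation by (simp_all add: A_def)
      ultimately have "a * m = b * m" by linarith
      then show "a = b" using m_pos by simp
    qed
    then show "card (A k) \<le> level_count threshold lam (y k)"
      unfolding level_count_def
      by (intro card_inj_on_le level_set_finite threshold_pos lam_pos) (auto simp: A_def)
  qed
  finally show ?thesis .
qed

text \<open>Deterministic core: on a surviving path, either half of the B blocks are calm (so the
  weight is at least w^{B/2}) or half are not (so the innovations are large).\<close>
lemma survival_alternative:
  assumes "B * m \<le> N" and w1: "w \<ge> 1"
    and margin: "\<delta> * (\<Sum>j<m. \<bar>c j\<bar>) \<ge> x + \<epsilon>"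
    and survival: "\<forall>n\<in>{1..N}. ma_path n y \<le> x"
  shows "1 \<le> w powr (- real B / 2) * weight B y
             + exp (- lam / 2 * (real B / 2))
               * (\<Prod>k\<in>{1..N}. 1 + exp (lam/2) * (y k)\<^sup>2 / threshold\<^sup>2)"
    (is "1 \<le> ?F + ?G")
proof -
  define a where "a = card {i\<in>{1..B}. calm i y}"
  define b where "b = card {i\<in>{1..B}. \<not> calm i y}"
  have "a + b = card ({i\<in>{1..B}. calm i y} \<union> {i\<in>{1..B}. \<not> calm i y})"
    unfolding a_def b_def by (intro card_Un_disjoint[symmetric]) auto
  also have "{i\<in>{1..B}. calm i y} \<union> {i\<in>{1..B}. \<not> calm i y} = {1..B}" by auto
  finally have "a + b = B" by simp
  have F_nonneg: "0 \<le> ?F" using weight_nonneg[OF w1] w1 by simp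
  have G_nonneg: "0 \<le> ?G" by (intro mult_nonneg_nonneg prod_nonneg) auto
  show ?thesis
  proof (cases "real a \<ge> real B / 2")
    case True
    have "?F = w powr (real a - real B / 2)"
      using weight_on_survival[OF m_pos assms(1) margin survival] w1
      by (simp add: a_def powr_realpow[symmetric] powr_add[symmetric])
    also have "\<dots> \<ge> 1" using True w1 ge_one_powr_ge_zero[of w "real a - real B / 2"] by simp
    finally show ?thesis using G_nonneg by linarith
  next
    case False
    then have b_large: "real B / 2 < real b" using \<open>a + b = B\<close> by linarith
    have "exp (lam / 2 * (real B / 2)) \<le> exp (lam / 2 * real b)"
      using b_large lam_pos by simp
    also have "\<dots> \<le> exp (lam / 2 * real (\<Sum>k\<in>{1..N}. level_count threshold lam (y k)))"
      using uncalm_count_le[OF assms(1), of y] lam_pos by (simp add: b_def del: of_nat_sum)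
    also have "\<dots> = (\<Prod>k\<in>{1..N}. exp (lam / 2 * real (level_count threshold lam (y k))))"
      by (simp add: of_nat_sum sum_distrib_left exp_sum)
    also have "\<dots> \<le> (\<Prod>k\<in>{1..N}. 1 + exp (lam/2) * (y k)\<^sup>2 / threshold\<^sup>2)"
      by (intro prod_mono conjI exp_level_count_le threshold_pos lam_pos) simp
    finally have "1 \<le> ?G" by (simp add: exp_minus field_simps)
    then show ?thesis using F_nonneg by linarith
  qed
qed

end

locale block_scheme_prob = block_scheme_decay c m \<delta> \<epsilon> w C lam + prob_space M
  for c m \<delta> \<epsilon> w C lam and M :: "'a measure" +
  fixes Y :: "nat \<Rightarrow> 'a \<Rightarrow> real" and p :: real
  assumes meas: "\<And>n. n \<ge> 1 \<Longrightarrow> Y n \<in> borel_measurable M"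
    and indep: "indep_vars (\<lambda>_. borel) Y {1..}"
    and ident: "\<And>n. n \<ge> 1 \<Longrightarrow> distr M borel (Y n) = distr M borel (Y 1)"
    and p_pos: "0 < p" and p_less_1: "p < 1"
    and w_def: "w = 1 / (1 - p ^ m)"
    and good_prob: "\<And>d. p \<le> (\<integral>\<omega>. indicator (good_set d) (Y 1 \<omega>) \<partial>M)"
    and square_integrable: "integrable M (\<lambda>\<omega>. (Y 1 \<omega>)\<^sup>2)"
begin

definition sample_path :: "'a \<Rightarrow> nat \<Rightarrow> real" where
  "sample_path \<omega> = restrict (\<lambda>k. Y k \<omega>) {1..}"

lemma sample_path_meas[measurable]: "sample_path \<in> measurable M (PiM {1..} (\<lambda>_. borel))"
  unfolding sample_path_def by (rule measurable_restrict) (use meas in auto)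

lemma p_power: "0 < p ^ m" "p ^ m < 1"
  using p_pos p_less_1 m_pos by (auto simp: power_less_one_iff)

lemma w_ge_1: "w \<ge> 1"
  using p_power by (simp add: w_def field_simps)

lemma integrable_bounded:
  fixes f :: "'a \<Rightarrow> real"
  assumes "f \<in> borel_measurable M" "\<And>\<omega>. \<omega> \<in> space M \<Longrightarrow> \<bar>f \<omega>\<bar> \<le> B"
  shows "integrable M f"
  by (rule integrable_const_bound[where B=B]) (use assms in auto)

lemma integral_ident_distr:
  fixes f :: "real \<Rightarrow> real"
  assumes n: "n \<ge> 1" and f: "f \<in> borel_measurable borel"
  shows "(\<integral>\<omega>. f (Y n \<omega>) \<partial>M) = (\<integral>\<omega>. f (Y 1 \<omega>) \<partial>M)"
  using integral_distr[of "Y n" M borel f] integral_distr[of "Y 1" M borel f]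
    meas[OF n] meas[of 1] f ident[OF n] by simp

lemma weight_integrable: "integrable M (\<lambda>\<omega>. weight j (sample_path \<omega>))"
  by (rule integrable_bounded[where B="w^j"])
     (use weight_le_power[OF w_ge_1] weight_nonneg[OF w_ge_1] in auto)

lemma good_window_expectation:
  assumes "i \<ge> 1"
  shows "(\<integral>\<omega>. good_window i (sample_path \<omega>) \<partial>M) \<ge> p ^ m"
proof -
  define W where "W = {(i-1)*m+1..i*m}"
  have W1: "W \<subseteq> {1..}" by (auto simp: W_def)
  have "(\<integral>\<omega>. good_window i (sample_path \<omega>) \<partial>M)
      = (\<integral>\<omega>. (\<Prod>k\<in>W. indicator (good_set (i*m-k)) (Y k \<omega>)) \<partial>M)"
    unfolding good_window_def W_def sample_path_def
    by (intro Bochner_Integration.integral_cong prod.cong) auto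
  also have "\<dots> = (\<Prod>k\<in>W. (\<integral>\<omega>. indicator (good_set (i*m-k)) (Y k \<omega>) \<partial>M))"
  proof (rule indep_vars_lebesgue_integral)
    have "indep_vars (\<lambda>_. borel) Y W" using indep W1 by (rule indep_vars_subset)
    then show "indep_vars (\<lambda>_. borel) (\<lambda>k \<omega>. indicator (good_set (i*m-k)) (Y k \<omega>) :: real) W"
      by (rule indep_vars_compose2) measurable
    fix k assume "k \<in> W"
    then have "Y k \<in> borel_measurable M" using W1 meas by auto
    then show "integrable M (\<lambda>\<omega>. indicator (good_set (i*m-k)) (Y k \<omega>) :: real)"
      by (intro integrable_bounded[where B=1]) (auto simp: indicator_def)
  qed (simp add: W_def)
  also have "\<dots> \<ge> (\<Prod>k\<in>W. p)"
  proof (rule prod_mono)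
    fix k assume "k \<in> W"
    then have "(\<integral>\<omega>. indicator (good_set (i*m-k)) (Y k \<omega>) \<partial>M)
               = (\<integral>\<omega>. indicator (good_set (i*m-k)) (Y 1 \<omega>) \<partial>M :: real)"
      using W1 by (intro integral_ident_distr) auto
    then show "0 \<le> p \<and> p \<le> (\<integral>\<omega>. indicator (good_set (i*m-k)) (Y k \<omega>) \<partial>M)"
      using good_prob p_pos by simp
  qed
  finally show ?thesis using assms by (cases i) (auto simp: W_def)
qed

lemma good_window_indep_past:
  fixes g :: "(nat \<Rightarrow> real) \<Rightarrow> real"
  assumes [measurable]: "g \<in> borel_measurable (PiM {1..j*m} (\<lambda>_. borel))"
    and "integrable M (\<lambda>\<omega>. g (restrict (\<lambda>k. Y k \<omega>) {1..j*m}))"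
  shows "(\<integral>\<omega>. good_window (Suc j) (sample_path \<omega>) * g (restrict (\<lambda>k. Y k \<omega>) {1..j*m}) \<partial>M)
       = (\<integral>\<omega>. good_window (Suc j) (sample_path \<omega>) \<partial>M)
         * (\<integral>\<omega>. g (restrict (\<lambda>k. Y k \<omega>) {1..j*m}) \<partial>M)"
proof -
  define W where "W = {j*m+1..Suc j*m}"
  define window where "window \<omega> = restrict (\<lambda>k. Y k \<omega>) W" for \<omega>
  have "indep_var (PiM W (\<lambda>_. borel)) window
          (PiM {1..j*m} (\<lambda>_. borel)) (\<lambda>\<omega>. restrict (\<lambda>k. Y k \<omega>) {1..j*m})"
    unfolding window_def by (rule indep_var_restrict[OF indep]) (auto simp: W_def)
  then have iv: "indep_var borel (good_window (Suc j) \<circ> window)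
                   borel (g \<circ> (\<lambda>\<omega>. restrict (\<lambda>k. Y k \<omega>) {1..j*m}))"
    by (rule indep_var_compose) measurable
  have same: "good_window (Suc j) (window \<omega>) = good_window (Suc j) (sample_path \<omega>)" for \<omega>
    unfolding window_def by (rule good_window_local) (auto simp: W_def sample_path_def)
  have "integrable M (\<lambda>\<omega>. good_window (Suc j) (sample_path \<omega>))"
  proof (rule integrable_bounded[where B=1])
    show "\<bar>good_window (Suc j) (sample_path \<omega>)\<bar> \<le> 1" for \<omega>
      using good_window_01[of "Suc j" "sample_path \<omega>"] by auto
  qed simp
  then show ?thesis
    using indep_var_lebesgue_integral[OF iv] assms(2) by (simp add: comp_def same)
qed

text \<open>The weight is a supermartingale along the blocks: the reward w on calm blocks is
  exactly compensated by the probability p^m of being killed.\<close>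
lemma weight_expectation_step:
  "(\<integral>\<omega>. weight (Suc j) (sample_path \<omega>) \<partial>M) \<le> (\<integral>\<omega>. weight j (sample_path \<omega>) \<partial>M)"
proof -
  define F where "F \<omega> = weight j (sample_path \<omega>)" for \<omega>
  define G where "G \<omega> = good_window (Suc j) (sample_path \<omega>)" for \<omega>
  define \<Phi> where "\<Phi> \<omega> = F \<omega> * (if calm (Suc j) (sample_path \<omega>) then w else 0)" for \<omega>
  have [measurable]: "F \<in> borel_measurable M" "G \<in> borel_measurable M" "\<Phi> \<in> borel_measurable M"
    unfolding F_def G_def \<Phi>_def by measurable
  have bound: "\<bar>F \<omega> * v\<bar> \<le> w^j * w" if "\<bar>v\<bar> \<le> w" for \<omega> v
  proof -
    have "0 \<le> F \<omega>" "F \<omega> \<le> w^j"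
      using weight_le_power[OF w_ge_1] weight_nonneg[OF w_ge_1] by (auto simp: F_def)
    then show ?thesis using that by (simp add: abs_mult mult_mono)
  qed
  have iF: "integrable M F"
    unfolding F_def by (rule weight_integrable)
  have \<Phi>_bound: "\<bar>\<Phi> \<omega>\<bar> \<le> w^j * w" for \<omega>
    unfolding \<Phi>_def using w_ge_1 by (intro bound) simp
  have G_bound: "\<bar>G \<omega>\<bar> \<le> 1" for \<omega>
    using good_window_01[of "Suc j" "sample_path \<omega>"] by (auto simp: G_def)
  have i\<Phi>: "integrable M \<Phi>"
    by (rule integrable_bounded[OF _ \<Phi>_bound]) simp
  have iG\<Phi>: "integrable M (\<lambda>\<omega>. G \<omega> * \<Phi> \<omega>)"
  proof (rule integrable_bounded[where B="1 * (w^j * w)"])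
    show "\<bar>G \<omega> * \<Phi> \<omega>\<bar> \<le> 1 * (w^j * w)" for \<omega>
      unfolding abs_mult by (rule mult_mono[OF G_bound \<Phi>_bound]) auto
  qed simp
  text \<open>\<Phi> only depends on the innovations of the first j blocks.\<close>
  define \<phi> where "\<phi> v = weight j v * (if calm (Suc j) v then w else 0)" for v
  have \<Phi>_past: "\<Phi> \<omega> = \<phi> (restrict (\<lambda>k. Y k \<omega>) {1..j*m})" for \<omega>
  proof -
    have "weight j (restrict (\<lambda>k. Y k \<omega>) {1..j*m}) = F \<omega>"
      unfolding F_def by (rule weight_local) (auto simp: sample_path_def)
    moreover have "past_sum (Suc j) (restrict (\<lambda>k. Y k \<omega>) {1..j*m}) = past_sum (Suc j) (sample_path \<omega>)"
      by (rule past_sum_local) (auto simp: sample_path_def)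
    ultimately show ?thesis by (simp add: \<phi>_def \<Phi>_def calm_def)
  qed
  have indep_G\<Phi>: "(\<integral>\<omega>. G \<omega> * \<Phi> \<omega> \<partial>M) = (\<integral>\<omega>. G \<omega> \<partial>M) * (\<integral>\<omega>. \<Phi> \<omega> \<partial>M)"
    using good_window_indep_past[of \<phi> j] i\<Phi> unfolding \<Phi>_past G_def \<phi>_def by simp
  have "(\<integral>\<omega>. \<Phi> \<omega> \<partial>M) \<ge> 0"
    using weight_nonneg[OF w_ge_1] w_ge_1 by (intro integral_nonneg_AE) (auto simp: \<Phi>_def F_def)
  then have "p ^ m * (\<integral>\<omega>. \<Phi> \<omega> \<partial>M) \<le> (\<integral>\<omega>. G \<omega> \<partial>M) * (\<integral>\<omega>. \<Phi> \<omega> \<partial>M)"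
    using good_window_expectation[of "Suc j"] by (simp add: G_def mult_right_mono)
  moreover have "weight (Suc j) (sample_path \<omega>) = (F \<omega> + (w - 1) * F \<omega> * (if calm (Suc j) (sample_path \<omega>) then 1 else 0)) - G \<omega> * \<Phi> \<omega>" for \<omega>
    by (simp add: weight_Suc factor_def F_def G_def \<Phi>_def algebra_simps)
  moreover have "(w - 1) * F \<omega> * (if calm (Suc j) (sample_path \<omega>) then 1 else 0) = p ^ m * \<Phi> \<omega>" for \<omega>
    using p_power by (simp add: \<Phi>_def w_def field_simps)
  ultimately show ?thesis
    using iF i\<Phi> iG\<Phi> indep_G\<Phi> unfolding F_def by (simp add: Bochner_Integration.integral_diff)
qed

lemma weight_expectation_le_1: "(\<integral>\<omega>. weight j (sample_path \<omega>) \<partial>M) \<le> 1"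
proof (induction j)
  case 0 then show ?case by (simp add: weight_def prob_space)
next
  case (Suc j) then show ?case using weight_expectation_step[of j] by linarith
qed

definition sigma2 :: real where
  "sigma2 = (\<integral>\<omega>. (Y 1 \<omega>)\<^sup>2 \<partial>M)"

lemma sigma2_nonneg: "sigma2 \<ge> 0"
  unfolding sigma2_def by simp

lemma square_integrable_n:
  assumes "n \<ge> 1"
  shows "integrable M (\<lambda>\<omega>. (Y n \<omega>)\<^sup>2)" "(\<integral>\<omega>. (Y n \<omega>)\<^sup>2 \<partial>M) = sigma2"
proof -
  have "integrable (distr M borel (Y 1)) (\<lambda>t. t\<^sup>2)"
    using square_integrable meas[of 1] by (subst integrable_distr_eq) auto
  then have "integrable (distr M borel (Y n)) (\<lambda>t. t\<^sup>2)" using ident[OF assms] by simp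
  then show "integrable M (\<lambda>\<omega>. (Y n \<omega>)\<^sup>2)" using meas[OF assms] by (subst (asm) integrable_distr_eq) auto
  show "(\<integral>\<omega>. (Y n \<omega>)\<^sup>2 \<partial>M) = sigma2"
    unfolding sigma2_def by (rule integral_ident_distr[OF assms]) measurable
qed

lemma product_expectation:
  fixes a :: real
  shows "integrable M (\<lambda>\<omega>. (\<Prod>k\<in>{1..N}. 1 + a * (Y k \<omega>)\<^sup>2))"
    and "(\<integral>\<omega>. (\<Prod>k\<in>{1..N}. 1 + a * (Y k \<omega>)\<^sup>2) \<partial>M) = (1 + a * sigma2) ^ N"
proof -
  have "indep_vars (\<lambda>_. borel) Y {1..N}" using indep by (rule indep_vars_subset) auto
  then have iv: "indep_vars (\<lambda>_. borel) (\<lambda>k \<omega>. 1 + a * (Y k \<omega>)\<^sup>2) {1..N}"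
    by (rule indep_vars_compose2[where Y="\<lambda>_ t. 1 + a * t\<^sup>2"]) measurable
  have int: "integrable M (\<lambda>\<omega>. 1 + a * (Y k \<omega>)\<^sup>2)" if "k \<in> {1..N}" for k
    using square_integrable_n(1)[of k] that by simp
  have "(\<integral>\<omega>. 1 + a * (Y k \<omega>)\<^sup>2 \<partial>M) = 1 + a * sigma2" if "k \<in> {1..N}" for k
    using square_integrable_n[of k] that by (simp add: prob_space)
  then show "(\<integral>\<omega>. (\<Prod>k\<in>{1..N}. 1 + a * (Y k \<omega>)\<^sup>2) \<partial>M) = (1 + a * sigma2) ^ N"
    using indep_vars_lebesgue_integral[OF _ iv int] by simp
  show "integrable M (\<lambda>\<omega>. (\<Prod>k\<in>{1..N}. 1 + a * (Y k \<omega>)\<^sup>2))"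
    using indep_vars_integrable[OF _ iv int] by simp
qed

lemma ma_proc_eq_ma_path: "ma_proc c Y n \<omega> = ma_path n (sample_path \<omega>)"
  unfolding ma_proc_def ma_path_def sample_path_def by (intro sum.cong) auto

text \<open>Integrating the deterministic alternative over the survival event, using E[weight] <= 1.\<close>
lemma persistence_block_bound:
  assumes margin: "\<delta> * (\<Sum>j<m. \<bar>c j\<bar>) \<ge> x + \<epsilon>"
  shows "persist_prob M (ma_proc c Y) N x \<le> w powr (- real (N div m) / 2)
          + exp (- lam / 2 * (real (N div m) / 2)) * (1 + exp (lam/2) / threshold\<^sup>2 * sigma2) ^ N"
proof -
  define B where "B = N div m"
  define a where "a = exp (lam/2) / threshold\<^sup>2"
  define S where "S = {\<omega>\<in>space M. \<forall>n\<in>{1..N}. ma_path n (sample_path \<omega>) \<le> x}"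
  have [measurable]: "S \<in> sets M" unfolding S_def by measurable
  define R where "R \<omega> = w powr (- real B / 2) * weight B (sample_path \<omega>)
             + exp (- lam / 2 * (real B / 2)) * (\<Prod>k\<in>{1..N}. 1 + a * (Y k \<omega>)\<^sup>2)" for \<omega>
  have R_integrable: "integrable M R"
    unfolding R_def using weight_integrable product_expectation(1) by simp
  have indicator_le_R: "indicator S \<omega> \<le> R \<omega>" if "\<omega> \<in> space M" for \<omega>
  proof (cases "\<omega> \<in> S")
    case True
    have "1 \<le> w powr (- real B / 2) * weight B (sample_path \<omega>)
             + exp (- lam / 2 * (real B / 2))
               * (\<Prod>k\<in>{1..N}. 1 + exp (lam/2) * (sample_path \<omega> k)\<^sup>2 / threshold\<^sup>2)"
      using True by (intro survival_alternative[OF _ w_ge_1 margin]) (simp_all add: B_def S_def)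
    also have "(\<Prod>k\<in>{1..N}. 1 + exp (lam/2) * (sample_path \<omega> k)\<^sup>2 / threshold\<^sup>2)
             = (\<Prod>k\<in>{1..N}. 1 + a * (Y k \<omega>)\<^sup>2)"
      by (intro prod.cong) (auto simp: sample_path_def a_def)
    finally show ?thesis using True by (simp add: R_def)
  next
    case False
    have "0 \<le> R \<omega>" unfolding R_def using weight_nonneg[OF w_ge_1]
      by (intro add_nonneg_nonneg mult_nonneg_nonneg prod_nonneg) (auto simp: a_def)
    then show ?thesis using False by simp
  qed
  have "persist_prob M (ma_proc c Y) N x = (\<integral>\<omega>. indicator S \<omega> \<partial>M)"
    unfolding persist_prob_def S_def ma_proc_eq_ma_path by simp
  also have "\<dots> \<le> (\<integral>\<omega>. R \<omega> \<partial>M)"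
    by (intro integral_mono indicator_le_R R_integrable integrable_real_indicator)
       (auto simp: less_top[symmetric])
  also have "\<dots> = w powr (- real B / 2) * (\<integral>\<omega>. weight B (sample_path \<omega>) \<partial>M)
       + exp (- lam / 2 * (real B / 2)) * (1 + a * sigma2) ^ N"
    unfolding R_def using weight_integrable product_expectation by simp
  also have "\<dots> \<le> w powr (- real B / 2) + exp (- lam / 2 * (real B / 2)) * (1 + a * sigma2) ^ N"
    using weight_expectation_le_1[of B] by (simp add: mult_left_le)
  finally show ?thesis by (simp add: B_def a_def)
qed

end

lemma real_div_lower:
  assumes "m \<ge> 1"
  shows "real (N div m) \<ge> real N / real m - 1"
proof -
  have "N mod m < m" using assms by simp
  moreover have "N = N div m * m + N mod m" by simp
  ultimately have "N \<le> N div m * m + m" by linarith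
  then have "real N \<le> (real (N div m) + 1) * real m"
    by (simp add: algebra_simps flip: of_nat_mult of_nat_add)
  then show ?thesis using assms by (simp add: field_simps)
qed

lemma reward_term_decay:
  fixes q :: real
  assumes "0 < q" "q < 1" "m \<ge> 1"
  shows "(1 / (1 - q)) powr (- real (N div m) / 2) \<le> exp (q/2) * exp (- q / (2 * real m) * real N)"
proof -
  have "q \<le> ln (1 / (1 - q))"
    using ln_one_minus_pos_upper_bound[of q] assms by (simp add: ln_div)
  then have "- real (N div m) / 2 * ln (1 / (1 - q)) \<le> - real (N div m) / 2 * q"
    by (intro mult_left_mono_neg) auto
  also have "\<dots> \<le> - (real N / real m - 1) / 2 * q"
    using real_div_lower[OF assms(3), of N] assms(1) by (intro mult_right_mono) auto
  also have "\<dots> = q/2 + (- q / (2 * real m) * real N)"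
    using assms(3) by (simp add: field_simps)
  finally show ?thesis
    using assms(2) by (simp add: powr_def mult.commute exp_add[symmetric])
qed

lemma chebyshev_term_decay:
  fixes lam b :: real
  assumes "lam > 0" "m \<ge> 1" "0 \<le> b" "b \<le> lam / (8 * real m)"
  shows "exp (- lam / 2 * (real (N div m) / 2)) * (1 + b) ^ N
         \<le> exp (lam/4) * exp (- lam / (8 * real m) * real N)"
proof -
  have "(1 + b) ^ N \<le> exp b ^ N"
    using assms(3) by (intro power_mono) (auto simp: add.commute exp_ge_add_one_self)
  also have "\<dots> \<le> exp (lam / (8 * real m) * real N)"
    using mult_right_mono[OF assms(4), of "real N"] by (simp add: exp_of_nat2_mult[symmetric])
  finally have "exp (- lam / 2 * (real (N div m) / 2)) * (1 + b) ^ N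
      \<le> exp (- lam / 2 * (real (N div m) / 2)) * exp (lam / (8 * real m) * real N)"
    by (rule mult_left_mono) simp
  also have "\<dots> = exp (- lam / 2 * (real (N div m) / 2) + lam / (8 * real m) * real N)"
    by (rule exp_add[symmetric])
  also have "\<dots> \<le> exp (lam/4 + (- lam / (8 * real m) * real N))"
  proof -
    have "- lam / 2 * (real (N div m) / 2) \<le> - lam / 2 * ((real N / real m - 1) / 2)"
      using real_div_lower[OF assms(2), of N] assms(1)
      by (intro mult_left_mono_neg divide_right_mono) auto
    moreover have "- lam / 2 * ((real N / real m - 1) / 2) + lam / (8 * real m) * real N
        = lam/4 + (- lam / (8 * real m) * real N)"
      using assms(2) by (simp add: field_simps)
    ultimately show ?thesis by simp
  qed
  also have "\<dots> = exp (lam/4) * exp (- lam / (8 * real m) * real N)"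
    by (rule exp_add)
  finally show ?thesis .
qed

lemma sq_le_exp: "t \<ge> 0 \<Longrightarrow> t\<^sup>2 / 4 \<le> exp (t::real)"
proof -
  assume t: "t \<ge> 0"
  have "t / 2 \<le> exp (t/2)" using exp_ge_add_one_self[of "t/2"] by linarith
  then have "(t/2)\<^sup>2 \<le> (exp (t/2))\<^sup>2" using t by (intro power_mono) auto
  also have "(exp (t/2))\<^sup>2 = exp t" by (simp add: power2_eq_square exp_add[symmetric])
  finally show ?thesis by (simp add: power_divide)
qed

text \<open>For long blocks the Chebyshev factor (1 + a \<sigma>^2) with a = e^{\<lambda>/2} / threshold^2 is
  below e^{\<lambda>/(8m)}, since threshold^2 grows like e^{\<lambda> m}.\<close>
lemma long_block_choice:
  fixes \<kappa> lam s :: real and m0 :: nat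
  assumes "\<kappa> > 0" "lam > 0" "s \<ge> 0"
  shows "\<exists>m\<ge>max m0 1. exp (lam/2) / (\<kappa> * exp (lam * real m / 2))\<^sup>2 * s \<le> lam / (8 * real m)"
proof -
  define D where "D = 8 * exp (lam/2) * (s + 1)"
  define \<eta> where "\<eta> = lam * \<kappa>\<^sup>2 / D"
  have D: "D > 0" using assms by (simp add: D_def add_nonneg_pos)
  have \<eta>: "\<eta> > 0" using assms D by (simp add: \<eta>_def)
  obtain n :: nat where n: "4 / (lam\<^sup>2 * \<eta>) < real n" using reals_Archimedean2 by blast
  define m where "m = max (max m0 1) n"
  have m: "m \<ge> max m0 1" "real m > 0" "4 / (lam\<^sup>2 * \<eta>) < real m"
    using n by (auto simp: m_def)
  have "real m / exp (lam * real m) \<le> real m / ((lam * real m)\<^sup>2 / 4)"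
    using sq_le_exp[of "lam * real m"] assms m by (intro divide_left_mono) auto
  also have "\<dots> = 4 / (lam\<^sup>2 * real m)" using m by (simp add: power2_eq_square field_simps)
  also have "\<dots> \<le> \<eta>" using m(3) assms \<eta> m(2) by (simp add: field_simps)
  finally have "real m \<le> \<eta> * exp (lam * real m)" by (simp add: divide_le_eq)
  then have "real m * D \<le> \<eta> * exp (lam * real m) * D"
    by (rule mult_right_mono) (use D in simp)
  also have "\<dots> = lam * \<kappa>\<^sup>2 * exp (lam * real m)"
    using D by (simp add: \<eta>_def)
  finally have "8 * real m * exp (lam/2) * (s + 1) \<le> lam * \<kappa>\<^sup>2 * exp (lam * real m)"
    by (simp add: D_def mult_ac)
  then have "exp (lam/2) / (\<kappa> * exp (lam * real m / 2))\<^sup>2 * (s + 1) \<le> lam / (8 * real m)"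
    using assms m(2)
    by (simp add: power_mult_distrib power2_eq_square exp_add[symmetric] field_simps)
  moreover have "exp (lam/2) / (\<kappa> * exp (lam * real m / 2))\<^sup>2 * s
      \<le> exp (lam/2) / (\<kappa> * exp (lam * real m / 2))\<^sup>2 * (s + 1)"
    by (intro mult_left_mono) auto
  ultimately show ?thesis using m(1) by (intro exI[of _ m]) auto
qed

lemma coeff_decay_from_tail:
  fixes c :: "nat \<Rightarrow> real"
  assumes "summable (\<lambda>k. \<bar>c k\<bar>)"
    and tail: "\<And>q. q \<ge> 1 \<Longrightarrow> (\<Sum>k. \<bar>c (k + q)\<bar>) \<le> C * exp (- lam * real q)"
    and "d \<ge> 1"
  shows "\<bar>c d\<bar> \<le> C * exp (- lam * real d)"
proof -
  have "summable (\<lambda>k. \<bar>c (k + d)\<bar>)"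
    using summable_ignore_initial_segment[OF assms(1), of d] by simp
  then have "(\<Sum>k\<in>{0}. \<bar>c (k + d)\<bar>) \<le> (\<Sum>k. \<bar>c (k + d)\<bar>)"
    by (rule sum_le_suminf) auto
  then show ?thesis using tail[OF assms(3)] by simp
qed

lemma block_margin:
  fixes c :: "nat \<Rightarrow> real"
  assumes "summable (\<lambda>k. \<bar>c k\<bar>)" "\<delta> > 0" "x < \<delta> * (\<Sum>k. \<bar>c k\<bar>)"
  obtains m0 \<epsilon> where "\<epsilon> > 0" "\<And>m. m \<ge> m0 \<Longrightarrow> \<delta> * (\<Sum>j<m. \<bar>c j\<bar>) \<ge> x + \<epsilon>"
proof -
  have "(\<lambda>n. \<delta> * (\<Sum>i<n. \<bar>c i\<bar>)) \<longlonglongrightarrow> \<delta> * (\<Sum>k. \<bar>c k\<bar>)"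
    by (intro tendsto_mult tendsto_const summable_LIMSEQ[OF assms(1)])
  then have "eventually (\<lambda>n. \<delta> * (\<Sum>i<n. \<bar>c i\<bar>) > x) sequentially"
    using assms(3) by (rule order_tendstoD(1))
  then obtain m0 where m0: "\<delta> * (\<Sum>i<m0. \<bar>c i\<bar>) > x" by (auto simp: eventually_sequentially)
  define \<epsilon> where "\<epsilon> = (\<delta> * (\<Sum>i<m0. \<bar>c i\<bar>) - x) / 2"
  have "\<delta> * (\<Sum>j<m. \<bar>c j\<bar>) \<ge> x + \<epsilon>" if "m \<ge> m0" for m
  proof -
    have "(\<Sum>i<m0. \<bar>c i\<bar>) \<le> (\<Sum>j<m. \<bar>c j\<bar>)" using that by (intro sum_mono2) auto
    then have "\<delta> * (\<Sum>i<m0. \<bar>c i\<bar>) \<le> \<delta> * (\<Sum>j<m. \<bar>c j\<bar>)" using assms(2) by simp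
    then show ?thesis using m0 unfolding \<epsilon>_def by argo
  qed
  moreover have "\<epsilon> > 0" using m0 by (simp add: \<epsilon>_def)
  ultimately show ?thesis using that by blast
qed

text \<open>Every admissible set has probability at least p = min(P(Y_1 > \<delta>), P(Y_1 < -\<delta>), 1/2).\<close>
lemma good_set_probability:
  fixes M :: "'a measure" and Y1 :: "'a \<Rightarrow> real"
  assumes "prob_space M" "Y1 \<in> borel_measurable M"
    and neg: "measure M {\<omega> \<in> space M. Y1 \<omega> < - \<delta>} > 0"
    and posi: "measure M {\<omega> \<in> space M. Y1 \<omega> > \<delta>} > 0"
  obtains p :: real where "0 < p" "p < 1"
    "\<And>d. p \<le> (\<integral>\<omega>. indicator (block_scheme.good_set c \<delta> d) (Y1 \<omega>) \<partial>M)"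
proof -
  interpret prob_space M by (rule assms(1))
  define p where
    "p = min (min (measure M {\<omega> \<in> space M. Y1 \<omega> > \<delta>}) (measure M {\<omega> \<in> space M. Y1 \<omega> < - \<delta>})) (1/2)"
  have "p \<le> (\<integral>\<omega>. indicator (block_scheme.good_set c \<delta> d) (Y1 \<omega>) \<partial>M)" for d
  proof -
    have [measurable]: "Y1 \<in> borel_measurable M" by (rule assms(2))
    have prob: "(\<integral>\<omega>. indicator (block_scheme.good_set c \<delta> d) (Y1 \<omega>) \<partial>M)
        = measure M {\<omega>\<in>space M. Y1 \<omega> \<in> block_scheme.good_set c \<delta> d}"
      by (simp add: indicator_vimage[symmetric] comp_def Int_def conj_commute)
    consider "c d > 0" | "c d < 0" | "c d = 0" by linarith
    then show ?thesis
      unfolding prob by cases (simp_all add: block_scheme.good_set_def p_def prob_space)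
  qed
  moreover have "0 < p" "p < 1" using neg posi by (auto simp: p_def)
  ultimately show ?thesis using that by blast
qed

theorem persistence_exponential_decay:
  fixes M :: "'a measure" and Y :: "nat \<Rightarrow> 'a \<Rightarrow> real"
    and c :: "nat \<Rightarrow> real" and C lam \<delta> x :: real
  assumes P: "prob_space M"
    and meas: "\<And>n. n \<ge> 1 \<Longrightarrow> Y n \<in> borel_measurable M"
    and indep: "prob_space.indep_vars M (\<lambda>_. borel) Y {1..}"
    and ident: "\<And>n. n \<ge> 1 \<Longrightarrow> distr M borel (Y n) = distr M borel (Y 1)"
    and csum: "summable (\<lambda>k. \<bar>c k\<bar>)"
    and Cpos: "C > 0" and lpos: "lam > 0"
    and tail: "\<And>q. q \<ge> 1 \<Longrightarrow> (\<Sum>k. \<bar>c (k + q)\<bar>) \<le> C * exp (- lam * real q)"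
    and sq: "integrable M (\<lambda>\<omega>. (Y 1 \<omega>)\<^sup>2)"
    and dpos: "\<delta> > 0"
    and neg: "measure M {\<omega> \<in> space M. Y 1 \<omega> < - \<delta>} > 0"
    and posi: "measure M {\<omega> \<in> space M. Y 1 \<omega> > \<delta>} > 0"
    and x: "x < \<delta> * (\<Sum>k. \<bar>c k\<bar>)"
  shows "\<exists>c1>0. \<exists>K. \<forall>N. persist_prob M (ma_proc c Y) N x \<le> K * exp (- c1 * real N)"
proof -
  obtain m0 \<epsilon> where eps: "\<epsilon> > 0"
    and margin: "\<And>m. m \<ge> m0 \<Longrightarrow> \<delta> * (\<Sum>j<m. \<bar>c j\<bar>) \<ge> x + \<epsilon>"
    using block_margin[OF csum dpos x] by blast
  obtain p :: real where p: "0 < p" "p < 1"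
    and good: "\<And>d. p \<le> (\<integral>\<omega>. indicator (block_scheme.good_set c \<delta> d) (Y 1 \<omega>) \<partial>M)"
    using good_set_probability[OF P meas[of 1] neg posi] by auto
  define \<kappa> where "\<kappa> = \<epsilon> * (1 - exp (- lam/2)) / C"
  define \<sigma>2 where "\<sigma>2 = (\<integral>\<omega>. (Y 1 \<omega>)\<^sup>2 \<partial>M)"
  obtain m where m: "m \<ge> max m0 1"
    and long: "exp (lam/2) / (\<kappa> * exp (lam * real m / 2))\<^sup>2 * \<sigma>2 \<le> lam / (8 * real m)"
    using long_block_choice[of \<kappa> lam \<sigma>2 m0] eps Cpos lpos by (auto simp: \<kappa>_def \<sigma>2_def)
  have m1: "m \<ge> 1" using m by simp
  interpret prob_space M by (rule P)
  have margin_m: "\<delta> * (\<Sum>j<m. \<bar>c j\<bar>) \<ge> x + \<epsilon>" using margin m by simp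
  interpret B: block_scheme_prob c m \<delta> \<epsilon> "1 / (1 - p ^ m)" C lam M Y p
  proof unfold_locales
    show "\<bar>c d\<bar> \<le> C * exp (- lam * real d)" if "d \<ge> 1" for d
      by (rule coeff_decay_from_tail[OF csum tail that])
    show "prob_space.indep_vars M (\<lambda>_. borel) Y {1..}" by (rule indep)
    show "Y n \<in> borel_measurable M" "distr M borel (Y n) = distr M borel (Y 1)" if "n \<ge> 1" for n
      using meas[OF that] ident[OF that] by simp_all
  qed (use m1 eps Cpos lpos p good sq in simp_all)
  define q where "q = p ^ m"
  define b where "b = exp (lam/2) / B.threshold\<^sup>2 * B.sigma2"
  define c1 where "c1 = min (q / (2 * real m)) (lam / (8 * real m))"
  have q: "0 < q" "q < 1" using B.p_power by (simp_all add: q_def)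
  have b: "0 \<le> b" "b \<le> lam / (8 * real m)"
    using long B.sigma2_nonneg by (simp_all add: b_def B.threshold_def \<kappa>_def B.sigma2_def \<sigma>2_def)
  have c1: "c1 > 0" using q lpos m1 by (simp add: c1_def)
  have "persist_prob M (ma_proc c Y) N x \<le> (exp (q/2) + exp (lam/4)) * exp (- c1 * real N)" for N
  proof -
    have "persist_prob M (ma_proc c Y) N x
        \<le> (1 / (1 - q)) powr (- real (N div m) / 2) + exp (- lam / 2 * (real (N div m) / 2)) * (1 + b) ^ N"
      using B.persistence_block_bound[OF margin_m, of N] by (simp add: q_def b_def)
    also have "\<dots> \<le> exp (q/2) * exp (- (q / (2 * real m)) * real N)
                  + exp (lam/4) * exp (- (lam / (8 * real m)) * real N)"
      using reward_term_decay[OF q m1, of N] chebyshev_term_decay[OF lpos m1 b, of N] by simp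
    also have "\<dots> \<le> exp (q/2) * exp (- c1 * real N) + exp (lam/4) * exp (- c1 * real N)"
    proof -
      have "c1 \<le> q / (2 * real m)" "c1 \<le> lam / (8 * real m)" by (simp_all add: c1_def)
      then have "c1 * real N \<le> q / (2 * real m) * real N" "c1 * real N \<le> lam / (8 * real m) * real N"
        by (simp_all only: mult_right_mono of_nat_0_le_iff)
      then show ?thesis by (intro add_mono) simp_all
    qed
    finally show ?thesis by (simp add: distrib_right)
  qed
  then show ?thesis using c1 by blast
qed

lemma bigo_of_exp_decay:
  fixes f g :: "nat \<Rightarrow> real"
  assumes nonneg: "\<And>N. 0 \<le> f N" and decay: "\<And>N. f N \<le> K * exp (- c * real N)"
    and above: "eventually (\<lambda>N. - c * real N \<le> g N) at_top"
  shows "f \<in> O(\<lambda>N. exp (g N))"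
proof (rule bigoI[where c=K])
  have K: "K \<ge> 0" using nonneg[of 0] decay[of 0] by simp
  show "eventually (\<lambda>N. norm (f N) \<le> K * norm (exp (g N))) at_top"
    using above
  proof eventually_elim
    case (elim N)
    then have "K * exp (- c * real N) \<le> K * exp (g N)" using K by (intro mult_left_mono) auto
    then show ?case using nonneg[of N] decay[of N] by simp
  qed
qed

lemma sqrt_le_real_nat: "sqrt (real N) \<le> real N"
proof (rule real_le_lsqrt)
  show "real N \<le> (real N)\<^sup>2"
  proof (cases N)
    case (Suc n)
    then have "real N * 1 \<le> real N * real N" by (intro mult_left_mono) auto
    then show ?thesis by (simp add: power2_eq_square)
  qed simp
qed simp

lemma div_ln_le_real_nat:
  assumes "N \<ge> 3"
  shows "real N / ln (real N) \<le> real N"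
proof -
  have "exp 1 \<le> real N" using exp_le assms by linarith
  then have ln: "1 \<le> ln (real N)" using assms by (simp add: ln_ge_iff)
  then have "real N * 1 \<le> real N * ln (real N)" by (intro mult_left_mono) auto
  then show ?thesis using ln by (simp add: divide_le_eq)
qed

text \<open>Both rates follow from the exponential decay.\<close>
theorem mainTheorem5:
  fixes M :: "'a measure" and Y :: "nat \<Rightarrow> 'a \<Rightarrow> real"
    and c :: "nat \<Rightarrow> real" and C lam \<delta> :: real
  assumes P: "prob_space M"
    and meas: "\<And>n. n \<ge> 1 \<Longrightarrow> Y n \<in> borel_measurable M"
    and indep: "prob_space.indep_vars M (\<lambda>_. borel) Y {1..}"
    and ident: "\<And>n. n \<ge> 1 \<Longrightarrow> distr M borel (Y n) = distr M borel (Y 1)"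
    and c0: "c 0 = 1"
    and csum: "summable (\<lambda>k. \<bar>c k\<bar>)"
    and Cpos: "C > 0" and lpos: "lam > 0"
    and tail: "\<And>q. q \<ge> 1 \<Longrightarrow> (\<Sum>k. \<bar>c (k + q)\<bar>) \<le> C * exp (- lam * real q)"
    and sq: "integrable M (\<lambda>\<omega>. (Y 1 \<omega>)\<^sup>2)"
    and dpos: "\<delta> > 0"
    and neg: "measure M {\<omega> \<in> space M. Y 1 \<omega> < - \<delta>} > 0"
    and posi: "measure M {\<omega> \<in> space M. Y 1 \<omega> > \<delta>} > 0"
  shows "(\<forall>x. 0 \<le> x \<and> x < \<delta> * (\<Sum>k. \<bar>c k\<bar>) \<longrightarrow>
            (\<exists>cx > 0. (\<lambda>N. persist_prob M (ma_proc c Y) N x)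
                         \<in> O(\<lambda>N. exp (- cx * sqrt (real N)))))
       \<and> ((\<exists>\<alpha> > 0. integrable M (\<lambda>\<omega>. exp (\<bar>Y 1 \<omega>\<bar> powr \<alpha>))) \<longrightarrow>
          (\<forall>x. 0 \<le> x \<and> x < \<delta> * (\<Sum>k. \<bar>c k\<bar>) \<longrightarrow>
            (\<exists>cx > 0. (\<lambda>N. persist_prob M (ma_proc c Y) N x)
                         \<in> O(\<lambda>N. exp (- cx * real N / ln (real N))))))"
proof -
  have nonneg: "0 \<le> persist_prob M (ma_proc c Y) N x" for N x
    by (simp add: persist_prob_def)
  have decay: "\<exists>c1>0. \<exists>K. \<forall>N. persist_prob M (ma_proc c Y) N x \<le> K * exp (- c1 * real N)"
    if "x < \<delta> * (\<Sum>k. \<bar>c k\<bar>)" for x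
    by (rule persistence_exponential_decay[OF P meas indep ident csum Cpos lpos tail sq dpos neg posi that])
  have "\<exists>cx>0. (\<lambda>N. persist_prob M (ma_proc c Y) N x) \<in> O(\<lambda>N. exp (- cx * sqrt (real N)))"
    and "\<exists>cx>0. (\<lambda>N. persist_prob M (ma_proc c Y) N x) \<in> O(\<lambda>N. exp (- cx * real N / ln (real N)))"
    if x: "x < \<delta> * (\<Sum>k. \<bar>c k\<bar>)" for x
  proof -
    obtain c1 K where c1: "c1 > 0" and bound: "\<And>N. persist_prob M (ma_proc c Y) N x \<le> K * exp (- c1 * real N)"
      using decay[OF x] by blast
    have "eventually (\<lambda>N. - c1 * real N \<le> - c1 * sqrt (real N)) at_top"
      using sqrt_le_real_nat c1 by simp
    from bigo_of_exp_decay[OF nonneg bound this]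
    show "\<exists>cx>0. (\<lambda>N. persist_prob M (ma_proc c Y) N x) \<in> O(\<lambda>N. exp (- cx * sqrt (real N)))"
      using c1 by blast
    have "eventually (\<lambda>N. - c1 * real N \<le> - c1 * real N / ln (real N)) at_top"
      using eventually_ge_at_top[of "3::nat"]
    proof eventually_elim
      case (elim N)
      then have "c1 * (real N / ln (real N)) \<le> c1 * real N"
        using div_ln_le_real_nat c1 by (intro mult_left_mono) auto
      then show ?case by simp
    qed
    from bigo_of_exp_decay[OF nonneg bound this]
    show "\<exists>cx>0. (\<lambda>N. persist_prob M (ma_proc c Y) N x) \<in> O(\<lambda>N. exp (- cx * real N / ln (real N)))"
      using c1 by blast
  qed
  then show ?thesis by simp
qed

end
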